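(* Let $\beta\in(0,1)$, $\alpha>0$, $\varepsilon>0$, $\rho\ge 0$, $\kappa\in[0,1)$, and consider the system $$x'=y,\qquad y'=\rho z^2\cos x+(z^2+\kappa)\sin x\cos x-\sin x-\varepsilon y,\qquad z'=\alpha(\cos x-\beta)$$ on $(0,\pi/2)\times\mathbb R\times[0,\infty)$, with equilibrium point $$P_0=\Big(\arccos\beta,\;0,\;\frac{(1-\kappa\beta)^{1/2}(1-\beta^2)^{1/4}}{\beta^{1/2}\big(\rho+(1-\beta^2)^{1/2}\big)^{1/2}}\Big).$$ Define $$\varepsilon_c=\frac{2\alpha\beta^{3/2}(1-\beta^2)^{3/4}(1-\kappa\beta)^{1/2}\big(\rho+(1-\beta^2)^{1/2}\big)^{3/2}}{(1-\beta^2)^{3/2}+\rho(1-\kappa\beta^3)}.$$ If $\varepsilon>\varepsilon_c$, then $P_0$ is an asymptotically stable equilibrium point. If $0<\varepsilon<\varepsilon_c$, then $P_0$ is unstable.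
   Context: This system is the nondimensionalized model of a steam engine coupled with a hexagonal centrifugal governor with a spring. Here $x$ is the angle of the governor arms, $y$ is a rescaled angular velocity of the arms, and $z$ is a rescaled engine speed. The parameter $\varepsilon$ is a rescaled friction coefficient, $\rho$ is a ratio of lengths, and $\kappa$ is a rescaled spring constant. The point $P_0$ is the unique equilibrium of the system in the domain $(0,\pi/2)\times\mathbb R\times[0,\infty)$. *)

theory Defs
  imports "HOL-Analysis.Analysis"
begin

type_synonym state = "real \<times> real \<times> real"

definition governor_field ::
  "real \<Rightarrow> real \<Rightarrow> real \<Rightarrow> real \<Rightarrow> real \<Rightarrow> state \<Rightarrow> state" where
  "governor_field \<alpha> \<beta> \<epsilon> \<rho> \<kappa> =
     (\<lambda>(x, y, z). (y,
        \<rho> * z\<^sup>2 * cos x + (z\<^sup>2 + \<kappa>) * sin x * cos x - sin x - \<epsilon> * y,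
        \<alpha> * (cos x - \<beta>)))"

definition governor_P0 :: "real \<Rightarrow> real \<Rightarrow> real \<Rightarrow> state" where
  "governor_P0 \<beta> \<rho> \<kappa> =
     (arccos \<beta>, 0,
      (sqrt (1 - \<kappa> * \<beta>) * (1 - \<beta>\<^sup>2) powr (1/4)) /
      (sqrt \<beta> * sqrt (\<rho> + sqrt (1 - \<beta>\<^sup>2))))"

definition governor_eps_c :: "real \<Rightarrow> real \<Rightarrow> real \<Rightarrow> real \<Rightarrow> real" where
  "governor_eps_c \<alpha> \<beta> \<rho> \<kappa> =
     (2 * \<alpha> * \<beta> powr (3/2) * (1 - \<beta>\<^sup>2) powr (3/4) * sqrt (1 - \<kappa> * \<beta>)
        * (\<rho> + sqrt (1 - \<beta>\<^sup>2)) powr (3/2)) /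
     ((1 - \<beta>\<^sup>2) powr (3/2) + \<rho> * (1 - \<kappa> * \<beta>^3))"

definition is_solution_on :: "(state \<Rightarrow> state) \<Rightarrow> real set \<Rightarrow> (real \<Rightarrow> state) \<Rightarrow> bool" where
  "is_solution_on f I \<phi> \<longleftrightarrow>
     (\<forall>t\<in>I. (\<phi> has_vector_derivative f (\<phi> t)) (at t within I))"

definition lyapunov_stable :: "(state \<Rightarrow> state) \<Rightarrow> state \<Rightarrow> bool" where
  "lyapunov_stable f p \<longleftrightarrow>
     (\<forall>e>0. \<exists>d>0. \<forall>x0. dist x0 p < d \<longrightarrow>
        (\<exists>\<phi>. is_solution_on f {0..} \<phi> \<and> \<phi> 0 = x0) \<and>
        (\<forall>T \<phi>. T > 0 \<longrightarrow> is_solution_on f {0..<T} \<phi> \<longrightarrow> \<phi> 0 = x0 \<longrightarrow>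
            (\<forall>t\<in>{0..<T}. dist (\<phi> t) p < e)))"

definition asymptotically_stable :: "(state \<Rightarrow> state) \<Rightarrow> state \<Rightarrow> bool" where
  "asymptotically_stable f p \<longleftrightarrow>
     lyapunov_stable f p \<and>
     (\<exists>\<eta>>0. \<forall>\<phi>. is_solution_on f {0..} \<phi> \<longrightarrow> dist (\<phi> 0) p < \<eta> \<longrightarrow>
        (\<phi> \<longlongrightarrow> p) at_top)"

end

theory Submission
  imports Defs "HOL-Real_Asymp.Real_Asymp"
begin

text \<open>The linearisation of the system at P0 has characteristic polynomial
  \<open>\<lambda>\<^sup>3 + \<epsilon> \<lambda>\<^sup>2 + a \<lambda> + k B\<close> with explicit positive a, B, k, and \<open>\<epsilon>\<^sub>c = k B / a\<close>, so
  \<open>\<epsilon> > \<epsilon>\<^sub>c\<close> is the Routh--Hurwitz condition \<open>\<epsilon> a > k B\<close>. Both halves use one explicit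
  quadratic form \<open>Q\<^sub>m\<close>: for m = 0 its derivative along the linearised flow is
  \<open>-(\<epsilon> a - k B) Y\<^sup>2\<close>, and a small cross term with the sign of \<open>\<epsilon> a - k B\<close> makes this
  derivative definite, which survives the \<open>o(|v|\<^sup>2)\<close> nonlinear remainder near P0.
  If \<open>\<epsilon> a > k B\<close>, \<open>Q\<^sub>m\<close> is also positive definite, hence a strict Lyapunov function and
  solutions near P0 decay exponentially; they exist for all times because they solve a globally
  Lipschitz modification of the field (Picard iteration) without ever entering the region where
  the modification differs from the field. If \<open>\<epsilon> a < k B\<close>, \<open>Q\<^sub>m\<close> is positive at points
  arbitrarily close to P0 and grows exponentially along every solution that stays near P0
  (Chetaev), contradicting stability.\<close>

section \<open>Global solutions by Picard iteration\<close>

primrec picard :: "('a::banach \<Rightarrow> 'a) \<Rightarrow> 'a \<Rightarrow> nat \<Rightarrow> real \<Rightarrow> 'a" where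
  "picard f x0 0 = (\<lambda>t. x0)"
| "picard f x0 (Suc n) = (\<lambda>t. x0 + integral {0..t} (\<lambda>s. f (picard f x0 n s)))"

lemma continuous_on_picard:
  assumes "continuous_on UNIV f"
  shows "continuous_on {0..T} (picard f x0 n)"
proof (induction n)
  case (Suc n)
  have "(\<lambda>s. f (picard f x0 n s)) integrable_on {0..T}"
    using continuous_on_compose2[OF assms Suc] by (intro integrable_continuous_real) auto
  from indefinite_integral_continuous_1[OF this] show ?case
    by (auto intro!: continuous_intros)
qed simp

lemma has_integral_power_0:
  assumes "0 \<le> t"
  shows "((\<lambda>s::real. s ^ k) has_integral t ^ Suc k / Suc k) {0..t}"
proof -
  have "((\<lambda>s. s ^ Suc k / Suc k) has_real_derivative x ^ k) (at x within {0..t})" for x :: real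
    using DERIV_cdivide[OF DERIV_pow[of "Suc k" x "{0..t}"], of "real (Suc k)"]
    by (simp del: of_nat_Suc)
  from fundamental_theorem_of_calculus[OF assms, of "\<lambda>s. s ^ Suc k / Suc k"] this
  show ?thesis by (simp add: has_real_derivative_iff_has_vector_derivative)
qed

lemma norm_picard_Suc_diff_le:
  fixes f :: "'a::banach \<Rightarrow> 'a"
  assumes lip: "L-lipschitz_on UNIV f" and "0 \<le> t"
  shows "norm (picard f x0 (Suc n) t - picard f x0 n t) \<le> norm (f x0) * L ^ n * t ^ Suc n / fact (Suc n)"
  using \<open>0 \<le> t\<close>
proof (induction n arbitrary: t)
  case 0
  then show ?case by (simp add: content_real)
next
  case (Suc n)
  have L: "0 \<le> L" using lipschitz_on_nonneg[OF lip] .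
  have cont: "continuous_on UNIV f" using lipschitz_on_continuous_on[OF lip] .
  have int: "(\<lambda>s. f (picard f x0 m s)) integrable_on {0..t}" for m
    by (intro integrable_continuous_real continuous_on_compose2[OF cont continuous_on_picard[OF cont]])
       auto
  define c where "c = L * (norm (f x0) * L ^ n / fact (Suc n))"
  have picard_Suc: "picard f x0 (Suc m) t = x0 + integral {0..t} (\<lambda>s. f (picard f x0 m s))" for m
    by simp
  have "picard f x0 (Suc (Suc n)) t - picard f x0 (Suc n) t
      = integral {0..t} (\<lambda>s. f (picard f x0 (Suc n) s) - f (picard f x0 n s))"
    unfolding picard_Suc by (simp del: picard.simps add: integral_diff[OF int int])
  also have "norm \<dots> \<le> integral {0..t} (\<lambda>s. c * s ^ Suc n)"
  proof (rule integral_norm_bound_integral)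
    show "(\<lambda>s. f (picard f x0 (Suc n) s) - f (picard f x0 n s)) integrable_on {0..t}"
      by (rule integrable_diff[OF int int])
    show "(\<lambda>s. c * s ^ Suc n) integrable_on {0..t}"
      by (intro integrable_continuous_real continuous_intros)
  next
    fix s assume s: "s \<in> {0..t}"
    have "norm (f (picard f x0 (Suc n) s) - f (picard f x0 n s))
        \<le> L * norm (picard f x0 (Suc n) s - picard f x0 n s)"
      using lipschitz_onD[OF lip] by (simp add: dist_norm)
    also have "\<dots> \<le> c * s ^ Suc n"
      using mult_left_mono[OF Suc.IH[of s] L] s by (simp add: c_def)
    finally show "norm (f (picard f x0 (Suc n) s) - f (picard f x0 n s)) \<le> c * s ^ Suc n" .
  qed
  also have "integral {0..t} (\<lambda>s. c * s ^ Suc n) = c * (t ^ Suc (Suc n) / Suc (Suc n))"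
    using has_integral_mult_right[OF has_integral_power_0[OF Suc.prems]] by (rule integral_unique)
  also have "\<dots> = norm (f x0) * L ^ Suc n * t ^ Suc (Suc n) / fact (Suc (Suc n))"
    by (simp add: c_def fact_Suc[of "Suc n"] field_simps del: fact_Suc of_nat_Suc)
  finally show ?case .
qed

lemma lipschitz_ode_has_global_solution:
  fixes f :: "'a::banach \<Rightarrow> 'a"
  assumes lip: "L-lipschitz_on UNIV f"
  shows "\<exists>\<phi>. \<phi> 0 = x0 \<and> (\<forall>t\<ge>0. (\<phi> has_vector_derivative f (\<phi> t)) (at t within {0..}))"
proof -
  define d where "d i t = picard f x0 (Suc i) t - picard f x0 i t" for i t
  define \<phi> where "\<phi> t = x0 + (\<Sum>i. d i t)" for t
  define M where "M = norm (f x0)"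
  have L: "0 \<le> L" using lipschitz_on_nonneg[OF lip] .
  have cont: "continuous_on UNIV f" using lipschitz_on_continuous_on[OF lip] .
  have unif: "uniform_limit {0..T} (picard f x0) \<phi> sequentially" for T
  proof -
    have "uniform_limit {0..T} (\<lambda>n t. \<Sum>i<n. d i t) (\<lambda>t. \<Sum>i. d i t) sequentially"
    proof (rule Weierstrass_m_test[where M = "\<lambda>i. M * L^i * T^Suc i / fact (Suc i)"])
      fix i t assume t: "t \<in> {0..T}"
      have "norm (d i t) \<le> M * L^i * t^Suc i / fact (Suc i)"
        unfolding d_def M_def using norm_picard_Suc_diff_le[OF lip] t by auto
      also have "\<dots> \<le> M * L^i * T^Suc i / fact (Suc i)"
        using t L by (intro divide_right_mono mult_left_mono power_mono) (auto simp: M_def)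
      finally show "norm (d i t) \<le> M * L^i * T^Suc i / fact (Suc i)" .
    next
      have "summable (\<lambda>i. M * \<bar>T\<bar> * (\<bar>L * T\<bar> ^ i / fact i))"
        using summable_exp[of "\<bar>L * T\<bar>"] by (intro summable_mult) (simp add: field_simps)
      then show "summable (\<lambda>i. M * L^i * T^Suc i / fact (Suc i))"
      proof (rule summable_comparison_test[rotated], intro exI allI impI)
        fix i :: nat
        have "norm (M * L ^ i * T ^ Suc i / fact (Suc i)) = M * \<bar>T\<bar> * (\<bar>L * T\<bar> ^ i / fact (Suc i))"
          using L by (simp add: M_def abs_mult power_abs power_mult_distrib)
        also have "\<dots> \<le> M * \<bar>T\<bar> * (\<bar>L * T\<bar> ^ i / fact i)"
          by (intro mult_left_mono divide_left_mono) (auto simp: M_def fact_mono)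
        finally show "norm (M * L ^ i * T ^ Suc i / fact (Suc i)) \<le> M * \<bar>T\<bar> * (\<bar>L * T\<bar> ^ i / fact i)" .
      qed
    qed
    moreover have "picard f x0 n t = x0 + (\<Sum>i<n. d i t)" for n t
      unfolding d_def using sum_lessThan_telescope[of "\<lambda>i. picard f x0 i t" n] by simp
    ultimately show ?thesis
      unfolding uniform_limit_iff \<phi>_def by (simp add: dist_norm)
  qed
  have cont_\<phi>: "continuous_on {0..T} \<phi>" for T
    by (rule uniform_limit_theorem[OF _ unif]) (auto simp: continuous_on_picard[OF cont])
  have integral_eq: "\<phi> t = x0 + integral {0..t} (\<lambda>s. f (\<phi> s))" if t: "0 \<le> t" for t
  proof -
    have "uniform_limit {0..t} (\<lambda>n s. f (picard f x0 n s)) (\<lambda>s. f (\<phi> s)) sequentially"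
      using uniform_limit_compose[OF unif lipschitz_on_uniformly_continuous[OF lip]]
      by (simp add: o_def)
    then obtain I J where I: "\<And>n. ((\<lambda>s. f (picard f x0 n s)) has_integral I n) {0..t}"
      and J: "((\<lambda>s. f (\<phi> s)) has_integral J) {0..t}" and IJ: "I \<longlonglongrightarrow> J"
      by (rule uniform_limit_integral)
         (auto intro!: continuous_on_compose2[OF cont continuous_on_picard[OF cont]])
    have "(\<lambda>n. picard f x0 (Suc n) t) \<longlonglongrightarrow> x0 + J"
      using integral_unique[OF I] by (simp add: tendsto_add[OF tendsto_const IJ])
    moreover have "(\<lambda>n. picard f x0 (Suc n) t) \<longlonglongrightarrow> \<phi> t"
      using LIMSEQ_Suc[OF tendsto_uniform_limitI[OF unif[of t], of t]] t
      by (simp del: picard.simps)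
    ultimately have "\<phi> t = x0 + J" using LIMSEQ_unique by blast
    with J show ?thesis by (simp add: integral_unique)
  qed
  have "(\<phi> has_vector_derivative f (\<phi> t)) (at t within {0..})" if t: "0 \<le> t" for t
  proof -
    have "continuous_on {0..t+1} (\<lambda>s. f (\<phi> s))"
      by (rule continuous_on_compose2[OF cont cont_\<phi>]) auto
    from integral_has_vector_derivative[OF this, of t] t
    have "((\<lambda>u. x0 + integral {0..u} (\<lambda>s. f (\<phi> s))) has_vector_derivative f (\<phi> t)) (at t within {0..t+1})"
      by (auto intro!: derivative_eq_intros)
    then have "(\<phi> has_vector_derivative f (\<phi> t)) (at t within {0..t+1})"
      by (rule has_vector_derivative_transform[rotated 2]) (use t integral_eq in auto)
    moreover have "at t within {0..t+1} = at t within {0..}"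
      by (rule at_within_nhd[where S="{t - 1 <..< t + 1}"]) auto
    ultimately show ?thesis by simp
  qed
  moreover have "\<phi> 0 = x0" using integral_eq[of 0] by simp
  ultimately show ?thesis by blast
qed

section \<open>Lyapunov and Chetaev criteria\<close>

lemma exp_decay_of_derivative_bound:
  fixes g g' :: "real \<Rightarrow> real"
  assumes "0 \<le> t"
    and deriv: "\<And>s. s \<in> {0..t} \<Longrightarrow> (g has_real_derivative g' s) (at s within {0..t})"
    and bound: "\<And>s. s \<in> {0<..<t} \<Longrightarrow> g' s \<le> - \<gamma> * g s"
  shows "g t \<le> exp (- \<gamma> * t) * g 0"
proof (cases "t = 0")
  case False
  define h where "h s = exp (\<gamma> * s) * g s" for s
  define h' where "h' s = exp (\<gamma> * s) * (\<gamma> * g s + g' s)" for s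
  have "(h has_real_derivative h' s) (at s within {0..t})" if "s \<in> {0..t}" for s
    unfolding h_def h'_def using deriv[OF that]
    by (auto intro!: derivative_eq_intros simp: algebra_simps)
  moreover have "0 < t" using \<open>0 \<le> t\<close> False by simp
  ultimately obtain \<xi> where \<xi>: "\<xi> \<in> {0<..<t}" "h t - h 0 = h' \<xi> * t"
    using mvt_simple[of 0 t h "\<lambda>s. (*) (h' s)"] by (auto simp: has_field_derivative_def)
  have "h' \<xi> \<le> 0"
    using bound[OF \<xi>(1)] by (simp add: h'_def mult_nonneg_nonpos)
  then have "exp (\<gamma> * t) * g t \<le> g 0"
    using \<xi>(2) \<open>0 < t\<close> mult_nonpos_nonneg[of "h' \<xi>" t] by (simp add: h_def)
  then have "exp (- \<gamma> * t) * (exp (\<gamma> * t) * g t) \<le> exp (- \<gamma> * t) * g 0"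
    by (rule mult_left_mono) simp
  then show ?thesis by (simp add: exp_minus field_simps)
qed simp

lemma is_solution_on_subset:
  "is_solution_on f I \<phi> \<Longrightarrow> J \<subseteq> I \<Longrightarrow> is_solution_on f J \<phi>"
  unfolding is_solution_on_def by (auto intro: has_vector_derivative_within_subset)

lemma has_real_derivative_along_solution:
  fixes V :: "state \<Rightarrow> real"
  assumes "is_solution_on f I \<phi>" "s \<in> I" "(V has_derivative DV) (at (\<phi> s))"
  shows "((\<lambda>s. V (\<phi> s)) has_real_derivative DV (f (\<phi> s))) (at s within I)"
proof -
  have "(\<phi> has_vector_derivative f (\<phi> s)) (at s within I)"
    using assms(1,2) by (simp add: is_solution_on_def)
  from vector_derivative_diff_chain_within[OF this has_derivative_subset[OF assms(3)]]
  show ?thesis by (simp add: has_real_derivative_iff_has_vector_derivative o_def)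
qed

lemma norm_less_by_first_exit:
  fixes \<phi> :: "real \<Rightarrow> 'a::real_normed_vector"
  assumes "continuous_on {0..t} \<phi>"
    and step: "\<And>s. s \<in> {0..t} \<Longrightarrow> (\<And>\<sigma>. \<sigma> \<in> {0<..<s} \<Longrightarrow> norm (\<phi> \<sigma> - p) < r) \<Longrightarrow> norm (\<phi> s - p) < r"
    and "s \<in> {0..t}"
  shows "norm (\<phi> s - p) < r"
proof -
  define C where "C = {0..t} \<inter> (\<lambda>s. norm (\<phi> s - p)) -` {r..}"
  have "C = {}"
  proof (rule ccontr)
    assume "C \<noteq> {}"
    have "closed C"
      unfolding C_def using assms(1) by (intro continuous_closed_preimage continuous_intros) auto
    moreover have "bdd_below C" by (auto simp: C_def)
    ultimately have "Inf C \<in> C" using closed_contains_Inf \<open>C \<noteq> {}\<close> by blast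
    moreover have "norm (\<phi> \<sigma> - p) < r" if "\<sigma> \<in> {0<..<Inf C}" for \<sigma>
    proof -
      have "\<sigma> \<notin> C" using that cInf_lower[OF _ \<open>bdd_below C\<close>, of \<sigma>] by force
      moreover have "\<sigma> \<in> {0..t}" using that \<open>Inf C \<in> C\<close> by (auto simp: C_def)
      ultimately show ?thesis by (auto simp: C_def)
    qed
    ultimately show False using step[of "Inf C"] by (auto simp: C_def)
  qed
  with \<open>s \<in> {0..t}\<close> show ?thesis by (force simp: C_def)
qed

text \<open>The decay estimate holds as long as the solution stays in the ball; at the first time the
  solution would reach the sphere, the estimate already places it strictly inside.\<close>
lemma lyapunov_trap:
  fixes f :: "state \<Rightarrow> state" and V :: "state \<Rightarrow> real"
  assumes V_deriv: "\<And>u. (V has_derivative DV u) (at u)"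
    and V_lower: "\<And>u. lam * (norm (u - p))\<^sup>2 \<le> V u" and "0 < lam"
    and V_decr: "\<And>u. norm (u - p) < r \<Longrightarrow> DV u (f u) \<le> - \<gamma> * V u" and "0 < r" "0 \<le> \<gamma>"
    and sol: "is_solution_on f I \<phi>" and "{0..t} \<subseteq> I" "0 \<le> t"
    and start: "V (\<phi> 0) < lam * r\<^sup>2"
  shows "norm (\<phi> t - p) < r \<and> V (\<phi> t) \<le> exp (- \<gamma> * t) * V (\<phi> 0)"
proof -
  have sol_t: "is_solution_on f {0..t} \<phi>" using is_solution_on_subset[OF sol \<open>{0..t} \<subseteq> I\<close>] .
  have decay: "V (\<phi> s) \<le> exp (- \<gamma> * s) * V (\<phi> 0)"
    if "s \<in> {0..t}" and inside: "\<And>\<sigma>. \<sigma> \<in> {0<..<s} \<Longrightarrow> norm (\<phi> \<sigma> - p) < r" for s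
  proof (rule exp_decay_of_derivative_bound)
    have sol_s: "is_solution_on f {0..s} \<phi>"
      by (rule is_solution_on_subset[OF sol_t]) (use that(1) in auto)
    show "((\<lambda>s. V (\<phi> s)) has_real_derivative DV (\<phi> \<sigma>) (f (\<phi> \<sigma>))) (at \<sigma> within {0..s})"
      if "\<sigma> \<in> {0..s}" for \<sigma>
      by (rule has_real_derivative_along_solution[OF sol_s that V_deriv])
  qed (use that V_decr inside in auto)
  have "norm (\<phi> s - p) < r" if "s \<in> {0..t}" for s
  proof (rule norm_less_by_first_exit[OF _ _ that])
    show "continuous_on {0..t} \<phi>"
      using sol_t unfolding is_solution_on_def continuous_on_eq_continuous_within
      by (auto intro: has_vector_derivative_continuous)
    fix s assume "s \<in> {0..t}" and inside: "\<And>\<sigma>. \<sigma> \<in> {0<..<s} \<Longrightarrow> norm (\<phi> \<sigma> - p) < r"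
    have "0 \<le> V (\<phi> 0)" using V_lower[of "\<phi> 0"] \<open>0 < lam\<close> by (smt (verit) zero_le_mult_iff zero_le_power2)
    then have "exp (- \<gamma> * s) * V (\<phi> 0) \<le> V (\<phi> 0)"
      using \<open>s \<in> {0..t}\<close> \<open>0 \<le> \<gamma>\<close> by (intro mult_left_le_one_le) auto
    then have "lam * (norm (\<phi> s - p))\<^sup>2 < lam * r\<^sup>2"
      using V_lower[of "\<phi> s"] decay[OF \<open>s \<in> {0..t}\<close> inside] start by linarith
    then show "norm (\<phi> s - p) < r"
      using \<open>0 < lam\<close> \<open>0 < r\<close> by (simp add: power_less_imp_less_base)
  qed
  then show ?thesis using decay[of t] \<open>0 \<le> t\<close> by auto
qed

lemma lipschitz_extension_convex:
  fixes f :: "'a::euclidean_space \<Rightarrow> 'b::metric_space"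
  assumes "L-lipschitz_on S f" "convex S" "closed S" "S \<noteq> {}"
  shows "\<exists>g. L-lipschitz_on UNIV g \<and> (\<forall>x\<in>S. g x = f x)"
proof (intro exI conjI)
  show "L-lipschitz_on UNIV (f \<circ> closest_point S)"
  proof (rule lipschitz_onI)
    fix x y
    have "dist (f (closest_point S x)) (f (closest_point S y)) \<le> L * dist (closest_point S x) (closest_point S y)"
      using lipschitz_onD[OF assms(1)] closest_point_in_set[OF assms(3,4)] by blast
    also have "\<dots> \<le> L * dist x y"
      using closest_point_lipschitz[OF assms(2-4)] lipschitz_on_nonneg[OF assms(1)] by (rule mult_left_mono)
    finally show "dist ((f \<circ> closest_point S) x) ((f \<circ> closest_point S) y) \<le> L * dist x y" by simp
  qed (rule lipschitz_on_nonneg[OF assms(1)])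
  show "\<forall>x\<in>S. (f \<circ> closest_point S) x = f x" by (simp add: closest_point_self)
qed

text \<open>The solution of a globally Lipschitz modification of F, equal to F on the closed ball,
  is trapped in the open ball and hence solves the original equation.\<close>
lemma global_solution_by_lyapunov:
  fixes F :: "state \<Rightarrow> state" and V :: "state \<Rightarrow> real"
  assumes V_deriv: "\<And>u. (V has_derivative DV u) (at u)"
    and V_lower: "\<And>u. lam * (norm (u - p))\<^sup>2 \<le> V u" and "0 < lam"
    and V_decr: "\<And>u. norm (u - p) < R \<Longrightarrow> DV u (F u) \<le> - \<gamma> * V u" and "0 < R" "0 \<le> \<gamma>"
    and F_lip: "L-lipschitz_on (cball p R) F"
    and start: "V x0 < lam * R\<^sup>2"
  shows "\<exists>\<phi>. is_solution_on F {0..} \<phi> \<and> \<phi> 0 = x0"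
proof -
  obtain G where G: "L-lipschitz_on UNIV G" "\<And>u. u \<in> cball p R \<Longrightarrow> G u = F u"
    using lipschitz_extension_convex[OF F_lip] \<open>0 < R\<close> by auto
  obtain \<phi> where "\<phi> 0 = x0" and \<phi>: "\<And>t. 0 \<le> t \<Longrightarrow> (\<phi> has_vector_derivative G (\<phi> t)) (at t within {0..})"
    using lipschitz_ode_has_global_solution[OF G(1)] by blast
  have sol_G: "is_solution_on G {0..} \<phi>" using \<phi> by (simp add: is_solution_on_def)
  have G_decr: "DV u (G u) \<le> - \<gamma> * V u" if "norm (u - p) < R" for u
    using V_decr[OF that] G(2)[of u] that by (simp add: dist_norm norm_minus_commute)
  have "G (\<phi> t) = F (\<phi> t)" if "0 \<le> t" for t
  proof (rule G(2))
    show "\<phi> t \<in> cball p R"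
      using lyapunov_trap[OF V_deriv V_lower \<open>0 < lam\<close> G_decr \<open>0 < R\<close> \<open>0 \<le> \<gamma>\<close> sol_G _ that]
        start \<open>\<phi> 0 = x0\<close>
      by (auto simp: dist_norm norm_minus_commute)
  qed
  then have "is_solution_on F {0..} \<phi>" using \<phi> by (simp add: is_solution_on_def)
  with \<open>\<phi> 0 = x0\<close> show ?thesis by blast
qed

lemma lyapunov_start_in_sublevel:
  assumes V_upper: "\<And>u. V u \<le> Lam * (norm (u - p))\<^sup>2" and "0 < lam" "0 < Lam"
    and "dist x0 p < r * sqrt (lam / Lam)"
  shows "V x0 < lam * r\<^sup>2"
proof -
  have "(norm (x0 - p))\<^sup>2 < (r * sqrt (lam / Lam))\<^sup>2"
    using assms(4) by (simp add: dist_norm power_strict_mono)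
  then have "Lam * (norm (x0 - p))\<^sup>2 < Lam * (r * sqrt (lam / Lam))\<^sup>2" using \<open>0 < Lam\<close> by simp
  also have "\<dots> = lam * r\<^sup>2"
    using \<open>0 < lam\<close> \<open>0 < Lam\<close> by (simp add: power_mult_distrib)
  finally show ?thesis using V_upper[of x0] by simp
qed

lemma lyapunov_stable_by_lyapunov:
  fixes F :: "state \<Rightarrow> state" and V :: "state \<Rightarrow> real"
  assumes V_deriv: "\<And>u. (V has_derivative DV u) (at u)"
    and V_lower: "\<And>u. lam * (norm (u - p))\<^sup>2 \<le> V u" and "0 < lam"
    and V_upper: "\<And>u. V u \<le> Lam * (norm (u - p))\<^sup>2" and "0 < Lam"
    and V_decr: "\<And>u. norm (u - p) < R \<Longrightarrow> DV u (F u) \<le> - \<gamma> * V u" and "0 < R" "0 \<le> \<gamma>"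
    and F_lip: "\<And>r. \<exists>L. L-lipschitz_on (cball p r) F"
  shows "lyapunov_stable F p"
  unfolding lyapunov_stable_def
proof (intro allI impI)
  fix e :: real assume "0 < e"
  define r where "r = min e R"
  define d where "d = r * sqrt (lam / Lam)"
  have "0 < r" "r \<le> R" using \<open>0 < e\<close> \<open>0 < R\<close> by (auto simp: r_def)
  have V_decr_r: "DV u (F u) \<le> - \<gamma> * V u" if "norm (u - p) < r" for u
    using V_decr that \<open>r \<le> R\<close> by simp
  show "\<exists>d>0. \<forall>x0. dist x0 p < d \<longrightarrow>
      (\<exists>\<phi>. is_solution_on F {0..} \<phi> \<and> \<phi> 0 = x0) \<and>
      (\<forall>T \<phi>. T > 0 \<longrightarrow> is_solution_on F {0..<T} \<phi> \<longrightarrow> \<phi> 0 = x0 \<longrightarrow>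
          (\<forall>t\<in>{0..<T}. dist (\<phi> t) p < e))"
  proof (intro exI[of _ d] conjI allI impI ballI)
    show "0 < d" using \<open>0 < r\<close> \<open>0 < lam\<close> \<open>0 < Lam\<close> by (simp add: d_def)
    fix x0 assume "dist x0 p < d"
    then have start: "V x0 < lam * r\<^sup>2"
      using lyapunov_start_in_sublevel[OF V_upper \<open>0 < lam\<close> \<open>0 < Lam\<close>] by (simp add: d_def)
    obtain L where "L-lipschitz_on (cball p r) F" using F_lip by blast
    from global_solution_by_lyapunov[OF V_deriv V_lower \<open>0 < lam\<close> V_decr_r \<open>0 < r\<close> \<open>0 \<le> \<gamma>\<close> this start]
    show "\<exists>\<phi>. is_solution_on F {0..} \<phi> \<and> \<phi> 0 = x0" .
    fix T \<phi> t assume "is_solution_on F {0..<T} \<phi>" "\<phi> 0 = x0" "t \<in> {0..<T}"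
    moreover have "{0..t} \<subseteq> {0..<T}" using \<open>t \<in> {0..<T}\<close> by auto
    ultimately show "dist (\<phi> t) p < e"
      using lyapunov_trap[OF V_deriv V_lower \<open>0 < lam\<close> V_decr_r \<open>0 < r\<close> \<open>0 \<le> \<gamma>\<close>] start
      by (auto simp: r_def dist_norm)
  qed
qed

lemma asymptotically_stable_by_lyapunov:
  fixes F :: "state \<Rightarrow> state" and V :: "state \<Rightarrow> real"
  assumes V_deriv: "\<And>u. (V has_derivative DV u) (at u)"
    and V_lower: "\<And>u. lam * (norm (u - p))\<^sup>2 \<le> V u" and "0 < lam"
    and V_upper: "\<And>u. V u \<le> Lam * (norm (u - p))\<^sup>2" and "0 < Lam"
    and V_decr: "\<And>u. norm (u - p) < R \<Longrightarrow> DV u (F u) \<le> - \<gamma> * V u" and "0 < R" "0 < \<gamma>"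
    and F_lip: "\<And>r. \<exists>L. L-lipschitz_on (cball p r) F"
  shows "asymptotically_stable F p"
proof -
  define \<eta> where "\<eta> = R * sqrt (lam / Lam)"
  have "(\<phi> \<longlongrightarrow> p) at_top" if sol: "is_solution_on F {0..} \<phi>" and "dist (\<phi> 0) p < \<eta>" for \<phi>
  proof -
    have start: "V (\<phi> 0) < lam * R\<^sup>2"
      using lyapunov_start_in_sublevel[OF V_upper \<open>0 < lam\<close> \<open>0 < Lam\<close>] that(2) by (simp add: \<eta>_def)
    have bound: "norm (\<phi> t - p) \<le> sqrt (exp (- \<gamma> * t) * (V (\<phi> 0) / lam))" if "0 \<le> t" for t
    proof (rule real_le_rsqrt)
      have "lam * (norm (\<phi> t - p))\<^sup>2 \<le> exp (- \<gamma> * t) * V (\<phi> 0)"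
        using V_lower[of "\<phi> t"] that start
          lyapunov_trap[OF V_deriv V_lower \<open>0 < lam\<close> V_decr \<open>0 < R\<close> less_imp_le[OF \<open>0 < \<gamma>\<close>] sol]
        by force
      then show "(norm (\<phi> t - p))\<^sup>2 \<le> exp (- \<gamma> * t) * (V (\<phi> 0) / lam)"
        using \<open>0 < lam\<close> by (simp add: field_simps)
    qed
    have "((\<lambda>t. exp (- \<gamma> * t)) \<longlongrightarrow> 0) at_top"
      using \<open>0 < \<gamma>\<close> by real_asymp
    from tendsto_real_sqrt[OF tendsto_mult_left_zero[OF this]]
    have "((\<lambda>t. sqrt (exp (- \<gamma> * t) * (V (\<phi> 0) / lam))) \<longlongrightarrow> 0) at_top"
      by (simp only: real_sqrt_zero)
    then have "((\<lambda>t. \<phi> t - p) \<longlongrightarrow> 0) at_top"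
      by (rule Lim_null_comparison[rotated]) (use bound in \<open>auto intro: eventually_at_top_linorderI\<close>)
    then show ?thesis by (simp add: LIM_zero_iff)
  qed
  moreover have "0 < \<eta>" using \<open>0 < R\<close> \<open>0 < lam\<close> \<open>0 < Lam\<close> by (simp add: \<eta>_def)
  ultimately show ?thesis
    unfolding asymptotically_stable_def
    using lyapunov_stable_by_lyapunov[OF V_deriv V_lower \<open>0 < lam\<close> V_upper \<open>0 < Lam\<close> V_decr \<open>0 < R\<close>
        less_imp_le[OF \<open>0 < \<gamma>\<close>] F_lip]
    by blast
qed

lemma lyapunov_stable_solutions_stay_near:
  assumes "lyapunov_stable F p" and "0 < e"
  obtains d where "0 < d" "\<And>x0. dist x0 p < d \<Longrightarrow>
    \<exists>\<phi>. is_solution_on F {0..} \<phi> \<and> \<phi> 0 = x0 \<and> (\<forall>t\<ge>0. dist (\<phi> t) p < e)"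
proof -
  obtain d where "0 < d" and stable: "\<And>x0. dist x0 p < d \<Longrightarrow>
        (\<exists>\<phi>. is_solution_on F {0..} \<phi> \<and> \<phi> 0 = x0) \<and>
        (\<forall>T \<phi>. T > 0 \<longrightarrow> is_solution_on F {0..<T} \<phi> \<longrightarrow> \<phi> 0 = x0 \<longrightarrow>
            (\<forall>t\<in>{0..<T}. dist (\<phi> t) p < e))"
    using assms unfolding lyapunov_stable_def by blast
  have "\<exists>\<phi>. is_solution_on F {0..} \<phi> \<and> \<phi> 0 = x0 \<and> (\<forall>t\<ge>0. dist (\<phi> t) p < e)"
    if x0: "dist x0 p < d" for x0
  proof -
    obtain \<phi> where sol: "is_solution_on F {0..} \<phi>" and "\<phi> 0 = x0" using stable[OF x0] by blast
    have "dist (\<phi> t) p < e" if "0 \<le> t" for t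
    proof -
      have "is_solution_on F {0..<t+1} \<phi>" by (rule is_solution_on_subset[OF sol]) auto
      then show ?thesis
        using conjunct2[OF stable[OF x0], rule_format, of "t+1" \<phi>] \<open>\<phi> 0 = x0\<close> that
        by auto
    qed
    with sol \<open>\<phi> 0 = x0\<close> show ?thesis by blast
  qed
  with \<open>0 < d\<close> show ?thesis using that by blast
qed

lemma not_lyapunov_stable_by_chetaev:
  fixes F :: "state \<Rightarrow> state" and W :: "state \<Rightarrow> real"
  assumes W_deriv: "\<And>u. (W has_derivative DW u) (at u)"
    and W_upper: "\<And>u. W u \<le> Lam * (norm (u - p))\<^sup>2"
    and W_incr: "\<And>u. norm (u - p) < R \<Longrightarrow> \<gamma> * W u \<le> DW u (F u)" and "0 < R" "0 < \<gamma>"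
    and W_pos: "\<And>d. 0 < d \<Longrightarrow> \<exists>x0. dist x0 p < d \<and> 0 < W x0"
  shows "\<not> lyapunov_stable F p"
proof
  assume "lyapunov_stable F p"
  then obtain d where "0 < d" and stays: "\<And>x0. dist x0 p < d \<Longrightarrow>
      \<exists>\<phi>. is_solution_on F {0..} \<phi> \<and> \<phi> 0 = x0 \<and> (\<forall>t\<ge>0. dist (\<phi> t) p < R)"
    using lyapunov_stable_solutions_stay_near \<open>0 < R\<close> by blast
  obtain x0 where x0: "dist x0 p < d" "0 < W x0" using W_pos[OF \<open>0 < d\<close>] by blast
  obtain \<phi> where sol: "is_solution_on F {0..} \<phi>" and "\<phi> 0 = x0"
    and near: "\<forall>t\<ge>0. dist (\<phi> t) p < R"
    using stays[OF x0(1)] by blast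
  then have inside: "norm (\<phi> t - p) < R" if "0 \<le> t" for t using that by (simp add: dist_norm)
  have growth: "exp (\<gamma> * t) * W x0 \<le> W (\<phi> t)" if "0 \<le> t" for t
  proof -
    have "- W (\<phi> t) \<le> exp (- (- \<gamma>) * t) * (- W (\<phi> 0))"
    proof (rule exp_decay_of_derivative_bound[OF that])
      fix s assume "s \<in> {0..t}"
      have "is_solution_on F {0..t} \<phi>" by (rule is_solution_on_subset[OF sol]) auto
      from has_real_derivative_along_solution[OF this \<open>s \<in> {0..t}\<close> W_deriv]
      show "((\<lambda>s. - W (\<phi> s)) has_real_derivative - DW (\<phi> s) (F (\<phi> s))) (at s within {0..t})"
        by (rule DERIV_minus)
    qed (use W_incr[OF inside] in auto)
    then show ?thesis using \<open>\<phi> 0 = x0\<close> by simp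
  qed
  have "0 < Lam"
    using W_upper[of x0] x0(2) by (smt (verit) zero_le_power2 mult_nonpos_nonneg)
  define t where "t = Lam * R\<^sup>2 / (\<gamma> * W x0)"
  have "0 \<le> t" using \<open>0 < Lam\<close> \<open>0 < \<gamma>\<close> x0(2) by (simp add: t_def)
  have "W x0 + Lam * R\<^sup>2 = (1 + \<gamma> * t) * W x0"
    using \<open>0 < \<gamma>\<close> x0(2) by (simp add: t_def field_simps)
  also have "\<dots> \<le> exp (\<gamma> * t) * W x0"
    using x0(2) exp_ge_add_one_self[of "\<gamma> * t"] by (intro mult_right_mono) auto
  also have "\<dots> \<le> W (\<phi> t)" by (rule growth[OF \<open>0 \<le> t\<close>])
  also have "\<dots> \<le> Lam * R\<^sup>2"
    using W_upper[of "\<phi> t"] inside[OF \<open>0 \<le> t\<close>] \<open>0 < Lam\<close>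
    by (smt (verit) mult_left_mono norm_ge_zero power_mono)
  finally show False using x0(2) by simp
qed

section \<open>Quadratic estimates near an equilibrium\<close>

lemma homogeneous2_lower_bound:
  fixes q :: "'a::euclidean_space \<Rightarrow> real"
  assumes "continuous_on UNIV q" and hom: "\<And>t u. q (t *\<^sub>R u) = t\<^sup>2 * q u"
    and pos: "\<And>u. u \<noteq> 0 \<Longrightarrow> 0 < q u"
  shows "\<exists>l>0. \<forall>u. l * (norm u)\<^sup>2 \<le> q u"
proof -
  have "sphere (0::'a) 1 \<noteq> {}" by simp
  then obtain u0 where u0: "u0 \<in> sphere 0 1" and min: "\<And>u. u \<in> sphere 0 1 \<Longrightarrow> q u0 \<le> q u"
    using continuous_attains_inf[OF compact_sphere _ continuous_on_subset[OF assms(1)]] by blast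
  have "q u0 * (norm u)\<^sup>2 \<le> q u" for u
  proof (cases "u = 0")
    case True
    then show ?thesis using hom[of 0 u] by simp
  next
    case False
    then have "u = norm u *\<^sub>R (u /\<^sub>R norm u)" by simp
    then have "q u = (norm u)\<^sup>2 * q (u /\<^sub>R norm u)" using hom by metis
    moreover have "q u0 \<le> q (u /\<^sub>R norm u)" using min False by simp
    ultimately show ?thesis by (metis mult.commute mult_left_mono zero_le_power2)
  qed
  moreover have "u0 \<noteq> 0" using u0 by auto
  then have "0 < q u0" by (rule pos)
  ultimately show ?thesis by blast
qed

lemma homogeneous2_upper_bound:
  fixes q :: "'a::euclidean_space \<Rightarrow> real"
  assumes "continuous_on UNIV q" and hom: "\<And>t u. q (t *\<^sub>R u) = t\<^sup>2 * q u"
  shows "\<exists>L>0. \<forall>u. q u \<le> L * (norm u)\<^sup>2"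
proof -
  have "sphere (0::'a) 1 \<noteq> {}" by simp
  then obtain u0 where max: "\<And>u. u \<in> sphere 0 1 \<Longrightarrow> q u \<le> q u0"
    using continuous_attains_sup[OF compact_sphere _ continuous_on_subset[OF assms(1)]] by blast
  define L where "L = max (q u0) 1"
  have "q u \<le> L * (norm u)\<^sup>2" for u
  proof (cases "u = 0")
    case True
    then show ?thesis using hom[of 0 u] by simp
  next
    case False
    then have "u = norm u *\<^sub>R (u /\<^sub>R norm u)" by simp
    then have "q u = (norm u)\<^sup>2 * q (u /\<^sub>R norm u)" using hom by metis
    moreover have "q (u /\<^sub>R norm u) \<le> L" using max[of "u /\<^sub>R norm u"] False by (simp add: L_def)
    ultimately show ?thesis by (metis mult.commute mult_left_mono zero_le_power2)
  qed
  moreover have "0 < L" by (simp add: L_def)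
  ultimately show ?thesis by blast
qed

lemma sum_of_squares_lower_bound:
  fixes w1 w2 w3 :: "'a::euclidean_space"
  assumes "0 < c1" "0 < c2" "0 < c3"
    and span: "\<And>v. inner w1 v = 0 \<Longrightarrow> inner w2 v = 0 \<Longrightarrow> inner w3 v = 0 \<Longrightarrow> v = 0"
  shows "\<exists>\<mu>>0. \<forall>v. \<mu> * (norm v)\<^sup>2 \<le> c1 * (inner w1 v)\<^sup>2 + c2 * (inner w2 v)\<^sup>2 + c3 * (inner w3 v)\<^sup>2"
proof (rule homogeneous2_lower_bound)
  show "continuous_on UNIV (\<lambda>v. c1 * (inner w1 v)\<^sup>2 + c2 * (inner w2 v)\<^sup>2 + c3 * (inner w3 v)\<^sup>2)"
    by (intro continuous_intros)
  show "c1 * (inner w1 (t *\<^sub>R v))\<^sup>2 + c2 * (inner w2 (t *\<^sub>R v))\<^sup>2 + c3 * (inner w3 (t *\<^sub>R v))\<^sup>2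
      = t\<^sup>2 * (c1 * (inner w1 v)\<^sup>2 + c2 * (inner w2 v)\<^sup>2 + c3 * (inner w3 v)\<^sup>2)" for t v
    by (simp add: algebra_simps)
  show "0 < c1 * (inner w1 v)\<^sup>2 + c2 * (inner w2 v)\<^sup>2 + c3 * (inner w3 v)\<^sup>2" if "v \<noteq> 0" for v
  proof -
    have "inner w1 v \<noteq> 0 \<or> inner w2 v \<noteq> 0 \<or> inner w3 v \<noteq> 0" using span that by blast
    then have "0 < c1 * (inner w1 v)\<^sup>2 \<or> 0 < c2 * (inner w2 v)\<^sup>2 \<or> 0 < c3 * (inner w3 v)\<^sup>2"
      using assms(1-3) by auto
    moreover have "0 \<le> c1 * (inner w1 v)\<^sup>2" "0 \<le> c2 * (inner w2 v)\<^sup>2" "0 \<le> c3 * (inner w3 v)\<^sup>2"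
      using assms(1-3) by simp_all
    ultimately show ?thesis by linarith
  qed
qed

lemma inner_field_lower_bound_near_equilibrium:
  fixes F A G :: "'a::real_inner \<Rightarrow> 'a"
  assumes "(F has_derivative A) (at p)" "F p = 0" "bounded_linear G"
    and definite: "\<And>v. \<mu> * (norm v)\<^sup>2 \<le> inner (G v) (A v)" and "0 < \<mu>"
  shows "\<exists>r>0. \<forall>u. norm (u - p) < r \<longrightarrow> \<mu> / 2 * (norm (u - p))\<^sup>2 \<le> inner (G (u - p)) (F u)"
proof -
  obtain K where "0 < K" and K: "\<And>v. norm (G v) \<le> norm v * K"
    using bounded_linear.pos_bounded[OF assms(3)] by blast
  have "0 < \<mu> / (2 * K)" using \<open>0 < \<mu>\<close> \<open>0 < K\<close> by simp
  with assms(1,2) obtain r where "0 < r"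
    and rem: "\<And>u. norm (u - p) < r \<Longrightarrow> norm (F u - A (u - p)) \<le> \<mu> / (2 * K) * norm (u - p)"
    unfolding has_derivative_at_alt by fastforce
  have "\<mu> / 2 * (norm (u - p))\<^sup>2 \<le> inner (G (u - p)) (F u)" if "norm (u - p) < r" for u
  proof -
    define v where "v = u - p"
    have "\<bar>inner (G v) (F u - A v)\<bar> \<le> norm v * K * (\<mu> / (2 * K) * norm v)"
      using Cauchy_Schwarz_ineq2[of "G v" "F u - A v"] K[of v] rem[OF that]
      by (smt (verit, best) mult_mono norm_ge_zero v_def)
    also have "\<dots> = \<mu> / 2 * (norm v)\<^sup>2" using \<open>0 < K\<close> by (simp add: power2_eq_square)
    finally have "- (\<mu> / 2 * (norm v)\<^sup>2) \<le> inner (G v) (F u) - inner (G v) (A v)"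
      unfolding inner_diff_right by linarith
    then show ?thesis using definite[of v] by (simp add: v_def)
  qed
  with \<open>0 < r\<close> show ?thesis by blast
qed

lemma lipschitz_on_mult_bounded:
  fixes f g :: "'a::metric_space \<Rightarrow> real"
  assumes f: "L-lipschitz_on S f" and g: "M-lipschitz_on S g"
    and f_bound: "\<And>x. x \<in> S \<Longrightarrow> \<bar>f x\<bar> \<le> Bf" and g_bound: "\<And>x. x \<in> S \<Longrightarrow> \<bar>g x\<bar> \<le> Bg"
    and "0 \<le> Bf" "0 \<le> Bg"
  shows "(Bf * M + Bg * L)-lipschitz_on S (\<lambda>x. f x * g x)"
proof (rule lipschitz_onI)
  fix x y assume "x \<in> S" "y \<in> S"
  have "\<bar>f x * g x - f y * g y\<bar> = \<bar>f x * (g x - g y) + g y * (f x - f y)\<bar>"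
    by (simp add: algebra_simps)
  also have "\<dots> \<le> \<bar>f x\<bar> * \<bar>g x - g y\<bar> + \<bar>g y\<bar> * \<bar>f x - f y\<bar>"
    by (metis abs_mult abs_triangle_ineq)
  also have "\<dots> \<le> Bf * (M * dist x y) + Bg * (L * dist x y)"
    using lipschitz_onD[OF f \<open>x \<in> S\<close> \<open>y \<in> S\<close>] lipschitz_onD[OF g \<open>x \<in> S\<close> \<open>y \<in> S\<close>]
      f_bound[OF \<open>x \<in> S\<close>] g_bound[OF \<open>y \<in> S\<close>]
    by (intro add_mono mult_mono) (auto simp: dist_real_def)
  finally show "dist (f x * g x) (f y * g y) \<le> (Bf * M + Bg * L) * dist x y"
    by (simp add: dist_real_def algebra_simps)
next
  show "0 \<le> Bf * M + Bg * L"
    using \<open>0 \<le> Bf\<close> \<open>0 \<le> Bg\<close> lipschitz_on_nonneg[OF f] lipschitz_on_nonneg[OF g] by simp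
qed

lemma lipschitz_on_sin:
  fixes f :: "'a::metric_space \<Rightarrow> real"
  assumes "L-lipschitz_on S f"
  shows "L-lipschitz_on S (\<lambda>x. sin (f x))"
proof -
  have sin_diff: "\<bar>sin a - sin b\<bar> \<le> \<bar>a - b\<bar>" for a b :: real
  proof -
    have "\<bar>sin a - sin b\<bar> = 2 * \<bar>sin ((a - b) / 2)\<bar> * \<bar>cos ((a + b) / 2)\<bar>"
      by (simp add: sin_diff_sin abs_mult)
    also have "\<dots> \<le> 2 * \<bar>(a - b) / 2\<bar> * 1"
      by (intro mult_mono abs_sin_x_le_abs_x abs_cos_le_one) auto
    finally show ?thesis by simp
  qed
  have "1-lipschitz_on (UNIV :: real set) sin"
    by (rule lipschitz_onI) (simp_all add: dist_real_def sin_diff)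
  from lipschitz_on_compose[OF assms lipschitz_on_subset[OF this]] show ?thesis by (simp add: o_def)
qed

lemma lipschitz_on_cos:
  fixes f :: "'a::metric_space \<Rightarrow> real"
  assumes "L-lipschitz_on S f"
  shows "L-lipschitz_on S (\<lambda>x. cos (f x))"
proof -
  have "L-lipschitz_on S (\<lambda>x. sin (pi / 2 - f x))"
    by (intro lipschitz_on_sin) (use lipschitz_on_diff[OF lipschitz_on_constant assms] in simp)
  then show ?thesis by (simp add: sin_cos_eq)
qed

lemma lipschitz_on_fst: "C-lipschitz_on S f \<Longrightarrow> C-lipschitz_on S (\<lambda>x. fst (f x))"
  by (rule lipschitz_onI) (auto dest: lipschitz_onD lipschitz_on_nonneg intro: order_trans[OF dist_fst_le])

lemma lipschitz_on_snd: "C-lipschitz_on S f \<Longrightarrow> C-lipschitz_on S (\<lambda>x. snd (f x))"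
  by (rule lipschitz_onI) (auto dest: lipschitz_onD lipschitz_on_nonneg intro: order_trans[OF dist_snd_le])

lemma governor_field_lipschitz_on_slab:
  assumes "0 \<le> Z"
  shows "\<exists>L. L-lipschitz_on {u. \<bar>snd (snd u)\<bar> \<le> Z} (governor_field \<alpha> \<beta> \<epsilon> \<rho> \<kappa>)"
proof -
  define S where "S = {u :: state. \<bar>snd (snd u)\<bar> \<le> Z}"
  define x :: "state \<Rightarrow> real" where "x u = fst u" for u
  define y :: "state \<Rightarrow> real" where "y u = fst (snd u)" for u
  define z :: "state \<Rightarrow> real" where "z u = snd (snd u)" for u
  have z_bound: "\<bar>z u\<bar> \<le> Z" if "u \<in> S" for u using that by (simp add: S_def z_def)
  have x_lip: "1-lipschitz_on S x" and y_lip: "1-lipschitz_on S y" and z_lip: "1-lipschitz_on S z"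
    unfolding x_def y_def z_def by (intro lipschitz_on_fst lipschitz_on_snd lipschitz_on_id)+
  have sin_lip: "1-lipschitz_on S (\<lambda>u. sin (x u))" and cos_lip: "1-lipschitz_on S (\<lambda>u. cos (x u))"
    using lipschitz_on_sin[OF x_lip] lipschitz_on_cos[OF x_lip] .
  have zz_bound: "\<bar>z u * z u\<bar> \<le> Z * Z" if "u \<in> S" for u
    by (metis abs_ge_zero abs_mult mult_mono z_bound[OF that] \<open>0 \<le> Z\<close>)
  have zz_lip: "(Z * 1 + Z * 1)-lipschitz_on S (\<lambda>u. z u * z u)"
    by (rule lipschitz_on_mult_bounded[OF z_lip z_lip z_bound z_bound \<open>0 \<le> Z\<close> \<open>0 \<le> Z\<close>])
  obtain C1 where C1: "C1-lipschitz_on S (\<lambda>u. z u * z u * cos (x u))"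
    using lipschitz_on_mult_bounded[OF zz_lip cos_lip zz_bound, of 1] \<open>0 \<le> Z\<close> by auto
  have sc_lip: "(1 * 1 + 1 * 1)-lipschitz_on S (\<lambda>u. sin (x u) * cos (x u))"
    by (rule lipschitz_on_mult_bounded[OF sin_lip cos_lip]) auto
  have zzk_lip: "(Z * 1 + Z * 1 + 0)-lipschitz_on S (\<lambda>u. z u * z u + \<kappa>)"
    by (intro lipschitz_intros zz_lip)
  have zzk_bound: "\<bar>z u * z u + \<kappa>\<bar> \<le> Z * Z + \<bar>\<kappa>\<bar>" if "u \<in> S" for u
    using zz_bound[OF that] by linarith
  have sc_bound: "\<bar>sin (x u) * cos (x u)\<bar> \<le> 1" for u
    by (simp add: abs_mult mult_le_one)
  have "0 \<le> Z * Z + \<bar>\<kappa>\<bar>" using \<open>0 \<le> Z\<close> by simp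
  from lipschitz_on_mult_bounded[OF zzk_lip sc_lip zzk_bound sc_bound this zero_le_one]
  obtain C2 where C2: "C2-lipschitz_on S (\<lambda>u. (z u * z u + \<kappa>) * (sin (x u) * cos (x u)))" by blast
  have "governor_field \<alpha> \<beta> \<epsilon> \<rho> \<kappa> = (\<lambda>u. (y u,
      \<rho> * (z u * z u * cos (x u)) + (z u * z u + \<kappa>) * (sin (x u) * cos (x u)) - sin (x u) - \<epsilon> * y u,
      \<alpha> * cos (x u) - \<alpha> * \<beta>))"
    by (auto simp: fun_eq_iff governor_field_def x_def y_def z_def power2_eq_square algebra_simps)
  moreover have "\<exists>L. L-lipschitz_on S (\<lambda>u. (y u,
      \<rho> * (z u * z u * cos (x u)) + (z u * z u + \<kappa>) * (sin (x u) * cos (x u)) - sin (x u) - \<epsilon> * y u,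
      \<alpha> * cos (x u) - \<alpha> * \<beta>))"
    by (rule exI, (rule lipschitz_on_Pair lipschitz_on_diff lipschitz_on_add lipschitz_on_cmult_real
        lipschitz_on_constant y_lip C1 C2 sin_lip cos_lip)+)
  ultimately show ?thesis by (simp add: S_def)
qed

lemma governor_field_lipschitz_on_bounded:
  assumes "bounded S"
  shows "\<exists>L. L-lipschitz_on S (governor_field \<alpha> \<beta> \<epsilon> \<rho> \<kappa>)"
proof -
  obtain a where a: "\<And>u. u \<in> S \<Longrightarrow> norm u \<le> a" using assms unfolding bounded_iff by blast
  have "\<bar>snd (snd u)\<bar> \<le> max a 0" if "u \<in> S" for u :: state
    using norm_snd_le[where x="fst u" and y="snd u"] norm_snd_le[where x="fst (snd u)" and y="snd (snd u)"]
      a[OF that]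
    by simp
  then have "S \<subseteq> {u. \<bar>snd (snd u)\<bar> \<le> max a 0}" by blast
  with governor_field_lipschitz_on_slab[of "max a 0"] show ?thesis
    by (meson lipschitz_on_subset max.cobounded2)
qed

section \<open>A quadratic Lyapunov form for the linearised system\<close>

definition linearized_field :: "real \<Rightarrow> real \<Rightarrow> real \<Rightarrow> real \<Rightarrow> state \<Rightarrow> state" where
  "linearized_field a e B k = (\<lambda>(X, Y, W). (Y, - a * X - e * Y + B * W, - k * X))"

text \<open>For m = 0 the derivative of this form along the flow of \<^const>\<open>linearized_field\<close> is
  \<open>-(e a - k B) Y\<^sup>2\<close>; the cross term \<open>m (B W - a X) (X - Y / e)\<close> makes it definite.\<close>
definition lyap_form :: "real \<Rightarrow> real \<Rightarrow> real \<Rightarrow> real \<Rightarrow> real \<Rightarrow> state \<Rightarrow> real" where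
  "lyap_form a e B k m = (\<lambda>(X, Y, W).
     (B * W - a * X)\<^sup>2 / 2 + a * Y\<^sup>2 / 2 + k * B * X * Y + e * k * B * X\<^sup>2 / 2
     + m * (B * W - a * X) * (X - Y / e))"

definition lyap_grad :: "real \<Rightarrow> real \<Rightarrow> real \<Rightarrow> real \<Rightarrow> real \<Rightarrow> state \<Rightarrow> state" where
  "lyap_grad a e B k m = (\<lambda>(X, Y, W).
     (- a * (B * W - a * X) + k * B * Y + e * k * B * X + m * ((B * W - a * X) - a * (X - Y / e)),
      a * Y + k * B * X - m * (B * W - a * X) / e,
      B * (B * W - a * X) + m * B * (X - Y / e)))"

lemma lyap_form_has_derivative:
  "(lyap_form a e B k m has_derivative (\<lambda>h. inner (lyap_grad a e B k m v) h)) (at v)"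
  unfolding lyap_form_def case_prod_unfold divide_inverse
  by (rule has_derivative_eq_rhs, (rule derivative_eq_intros | simp)+)
     (simp add: fun_eq_iff inner_prod_def lyap_grad_def case_prod_unfold field_simps,
      simp add: diff_divide_distrib)

lemma lyap_form_diff_has_derivative:
  "((\<lambda>u. lyap_form a e B k m (u - p)) has_derivative (\<lambda>h. inner (lyap_grad a e B k m (u - p)) h)) (at u)"
  using has_derivative_compose[OF has_derivative_diff[OF has_derivative_ident has_derivative_const]
      lyap_form_has_derivative]
  by simp

lemma continuous_on_lyap_form: "continuous_on UNIV (lyap_form a e B k m)"
  unfolding lyap_form_def case_prod_unfold divide_inverse by (intro continuous_intros)

lemma lyap_form_scaleR: "lyap_form a e B k m (t *\<^sub>R v) = t\<^sup>2 * lyap_form a e B k m v"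
  by (cases v) (simp add: lyap_form_def algebra_simps power2_eq_square)

lemma bounded_linear_lyap_grad: "bounded_linear (lyap_grad a e B k m)"
  unfolding linear_conv_bounded_linear[symmetric]
  by (rule linearI) (auto simp: lyap_grad_def algebra_simps diff_divide_distrib add_divide_distrib)

lemma inner_lyap_grad_linearized_field:
  assumes "e \<noteq> 0"
  shows "inner (lyap_grad a e B k m (X, Y, W)) (linearized_field a e B k (X, Y, W))
    = - (e * a - k * B) * Y\<^sup>2 - m * (k * B * X\<^sup>2 + (B * W - a * X - e * Y)\<^sup>2 / e
        - (e + a / e) * Y\<^sup>2 + (e * a - k * B) / e * X * Y)"
  using assms by (simp add: lyap_grad_def linearized_field_def inner_prod_def field_simps power2_eq_square)

lemma lyap_derivative_definite:
  assumes "0 < e" "0 < B" "0 < k"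
    and \<sigma>: "\<sigma> = 1 \<or> \<sigma> = -1" and "0 < \<sigma> * (e * a - k * B)" and "0 < \<delta>"
    and small: "\<delta> * (e + a / e + (e * a - k * B)\<^sup>2 / (2 * (k * B) * e\<^sup>2)) \<le> \<sigma> * (e * a - k * B) / 2"
  shows "\<exists>\<mu>>0. \<forall>v. \<mu> * (norm v)\<^sup>2
    \<le> - \<sigma> * inner (lyap_grad a e B k (\<sigma> * \<delta>) v) (linearized_field a e B k v)"
proof -
  define c where "c = k * B"
  define D where "D = e * a - c"
  have "0 < c" using \<open>0 < B\<close> \<open>0 < k\<close> by (simp add: c_def)
  have "0 < \<delta> * c / 2" "0 < \<delta> / e" "0 < \<sigma> * D / 2"
    using \<open>0 < \<delta>\<close> \<open>0 < c\<close> \<open>0 < e\<close> \<open>0 < \<sigma> * (e * a - k * B)\<close> by (simp_all add: D_def c_def)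
  moreover have "v = 0" if "inner (1, 0, 0) v = 0" "inner (- a, - e, B) v = 0" "inner (0, 1, 0) v = 0"
    for v :: state
    using that \<open>0 < B\<close> by (cases v) (simp add: inner_prod_def zero_prod_def)
  ultimately obtain \<mu> where "0 < \<mu>" and \<mu>: "\<And>v. \<mu> * (norm v)\<^sup>2 \<le> \<delta> * c / 2 * (inner (1, 0, 0) v)\<^sup>2
      + \<delta> / e * (inner (- a, - e, B) v)\<^sup>2 + \<sigma> * D / 2 * (inner (0, 1, 0) v)\<^sup>2"
    using sum_of_squares_lower_bound by blast
  have "\<delta> * c / 2 * (inner (1, 0, 0) v)\<^sup>2 + \<delta> / e * (inner (- a, - e, B) v)\<^sup>2 + \<sigma> * D / 2 * (inner (0, 1, 0) v)\<^sup>2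
    \<le> - \<sigma> * inner (lyap_grad a e B k (\<sigma> * \<delta>) v) (linearized_field a e B k v)" for v
  proof (cases v)
    case (fields X Y W)
    have "- \<sigma> * inner (lyap_grad a e B k (\<sigma> * \<delta>) v) (linearized_field a e B k v)
        - (\<delta> * c / 2 * X\<^sup>2 + \<delta> / e * (B * W - a * X - e * Y)\<^sup>2 + \<sigma> * D / 2 * Y\<^sup>2)
      = \<delta> / (2 * c) * (c * X + D / e * Y)\<^sup>2
        + (\<sigma> * D / 2 - \<delta> * (e + a / e + D\<^sup>2 / (2 * c * e\<^sup>2))) * Y\<^sup>2"
      using \<sigma> \<open>0 < e\<close> \<open>0 < B\<close> \<open>0 < k\<close>
      by (elim disjE)
         (simp_all add: fields inner_lyap_grad_linearized_field D_def c_def field_simps power2_eq_square)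
    also have "\<dots> \<ge> 0"
      using \<open>0 < \<delta>\<close> \<open>0 < c\<close> small by (simp add: D_def c_def)
    finally show ?thesis by (simp add: fields inner_prod_def algebra_simps)
  qed
  with \<open>0 < \<mu>\<close> \<mu> show ?thesis by (meson order_trans)
qed

lemma lyap_form_lower_bound:
  assumes "0 < e"
    and "\<delta>\<^sup>2 \<le> e * (k * B) / 8" and "\<delta>\<^sup>2 \<le> (e * a - k * B) * e / 32"
  shows "(B * W - a * X)\<^sup>2 / 4 + e * (k * B) * (X + Y / e)\<^sup>2 / 4 + (e * a - k * B) / (4 * e) * Y\<^sup>2
    \<le> lyap_form a e B k \<delta> (X, Y, W)"
proof -
  define S where "S = B * W - a * X"
  define P where "P = X + Y / e"
  define D where "D = e * a - k * B"
  have "lyap_form a e B k \<delta> (X, Y, W) - (S\<^sup>2 / 4 + e * (k * B) * P\<^sup>2 / 4 + D / (4 * e) * Y\<^sup>2)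
     = (S + 4 * \<delta> * P)\<^sup>2 / 8 + (S - 8 * \<delta> * Y / e)\<^sup>2 / 8
       + (e * (k * B) / 4 - 2 * \<delta>\<^sup>2) * P\<^sup>2 + (D / (4 * e) - 8 * \<delta>\<^sup>2 / e\<^sup>2) * Y\<^sup>2"
    using \<open>0 < e\<close> unfolding lyap_form_def S_def P_def D_def by (simp add: field_simps power2_eq_square)
  moreover have "0 \<le> (e * (k * B) / 4 - 2 * \<delta>\<^sup>2) * P\<^sup>2" using assms(2) by simp
  moreover have "0 \<le> (D / (4 * e) - 8 * \<delta>\<^sup>2 / e\<^sup>2) * Y\<^sup>2"
  proof -
    have "8 * \<delta>\<^sup>2 / e\<^sup>2 \<le> 8 * (D * e / 32) / e\<^sup>2"
      using assms(3) by (intro divide_right_mono) (auto simp: D_def mult.commute)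
    also have "\<dots> = D / (4 * e)" using \<open>0 < e\<close> by (simp add: field_simps power2_eq_square)
    finally show ?thesis by simp
  qed
  moreover have "0 \<le> (S + 4 * \<delta> * P)\<^sup>2 / 8" "0 \<le> (S - 8 * \<delta> * Y / e)\<^sup>2 / 8" by simp_all
  ultimately show ?thesis unfolding S_def P_def D_def by linarith
qed

lemma lyap_form_positive_definite:
  assumes "0 < e" "0 < B" "0 < k * B" "k * B < e * a"
    and "\<delta>\<^sup>2 \<le> e * (k * B) / 8" and "\<delta>\<^sup>2 \<le> (e * a - k * B) * e / 32"
  shows "\<exists>l>0. \<forall>v. l * (norm v)\<^sup>2 \<le> lyap_form a e B k \<delta> v"
proof -
  have "0 < (1 :: real) / 4" "0 < e * (k * B) / 4" "0 < (e * a - k * B) / (4 * e)"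
    using assms(1,3,4) by simp_all
  moreover have "v = 0" if "inner (- a, 0, B) v = 0" "inner (1, 1 / e, 0) v = 0" "inner (0, 1, 0) v = 0"
    for v :: state
    using that \<open>0 < B\<close> by (cases v) (simp add: inner_prod_def zero_prod_def)
  ultimately obtain l where "0 < l" and l: "\<And>v. l * (norm v)\<^sup>2 \<le> 1 / 4 * (inner (- a, 0, B) v)\<^sup>2
      + e * (k * B) / 4 * (inner (1, 1 / e, 0) v)\<^sup>2 + (e * a - k * B) / (4 * e) * (inner (0, 1, 0) v)\<^sup>2"
    using sum_of_squares_lower_bound by blast
  have "l * (norm v)\<^sup>2 \<le> lyap_form a e B k \<delta> v" for v
  proof (cases v)
    case (fields X Y W)
    have "1 / 4 * (inner (- a, 0, B) v)\<^sup>2 + e * (k * B) / 4 * (inner (1, 1 / e, 0) v)\<^sup>2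
        + (e * a - k * B) / (4 * e) * (inner (0, 1, 0) v)\<^sup>2
      = (B * W - a * X)\<^sup>2 / 4 + e * (k * B) * (X + Y / e)\<^sup>2 / 4 + (e * a - k * B) / (4 * e) * Y\<^sup>2"
      by (simp add: fields inner_prod_def algebra_simps)
    also have "\<dots> \<le> lyap_form a e B k \<delta> v"
      unfolding fields by (rule lyap_form_lower_bound[OF \<open>0 < e\<close> assms(5,6)])
    finally show ?thesis using l[of v] by linarith
  qed
  with \<open>0 < l\<close> show ?thesis by blast
qed

lemma linearized_stable_lyapunov:
  assumes "0 < a" "0 < e" "0 < B" "0 < k" and "k * B < e * a"
  shows "\<exists>m. (\<exists>l>0. \<forall>v. l * (norm v)\<^sup>2 \<le> lyap_form a e B k m v)
    \<and> (\<exists>\<mu>>0. \<forall>v. \<mu> * (norm v)\<^sup>2 \<le> - inner (lyap_grad a e B k m v) (linearized_field a e B k v))"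
proof -
  define D where "D = e * a - k * B"
  define T where "T = e + a / e + D\<^sup>2 / (2 * (k * B) * e\<^sup>2)"
  have "0 < D" "0 < k * B" using assms by (simp_all add: D_def)
  then have "0 < T" using \<open>0 < a\<close> \<open>0 < e\<close> by (simp add: T_def add_pos_nonneg)
  define \<delta> where "\<delta> = min (D / (2 * T)) (min (sqrt (e * (k * B) / 8)) (sqrt (D * e / 32)))"
  have "0 < \<delta>" using \<open>0 < D\<close> \<open>0 < T\<close> \<open>0 < e\<close> \<open>0 < k * B\<close> by (simp add: \<delta>_def)
  have "\<delta> * T \<le> D / 2"
    using mult_right_mono[of \<delta> "D / (2 * T)" T] \<open>0 < T\<close> by (simp add: \<delta>_def)
  then obtain \<mu> where "0 < \<mu>"
    and \<mu>: "\<And>v. \<mu> * (norm v)\<^sup>2 \<le> - inner (lyap_grad a e B k \<delta> v) (linearized_field a e B k v)"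
    using lyap_derivative_definite[OF assms(2-4), where a = a and \<sigma> = 1 and \<delta> = \<delta>] \<open>0 < D\<close> \<open>0 < \<delta>\<close> by (auto simp: D_def T_def)
  have "\<delta>\<^sup>2 \<le> (sqrt (e * (k * B) / 8))\<^sup>2" "\<delta>\<^sup>2 \<le> (sqrt (D * e / 32))\<^sup>2"
    using \<open>0 < \<delta>\<close> by (intro power_mono; simp add: \<delta>_def)+
  then have "\<delta>\<^sup>2 \<le> e * (k * B) / 8" "\<delta>\<^sup>2 \<le> (e * a - k * B) * e / 32"
    using \<open>0 < e\<close> \<open>0 < k * B\<close> \<open>0 < D\<close> by (simp_all add: D_def)
  then obtain l where "0 < l" "\<forall>v. l * (norm v)\<^sup>2 \<le> lyap_form a e B k \<delta> v"
    using lyap_form_positive_definite[OF assms(2,3) \<open>0 < k * B\<close> assms(5)] by blast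
  with \<open>0 < \<mu>\<close> \<mu> show ?thesis by blast
qed

lemma linearized_unstable_chetaev:
  assumes "0 < a" "0 < e" "0 < B" "0 < k" and "e * a < k * B"
  shows "\<exists>m. \<exists>\<mu>>0. \<forall>v. \<mu> * (norm v)\<^sup>2 \<le> inner (lyap_grad a e B k m v) (linearized_field a e B k v)"
proof -
  define D where "D = k * B - e * a"
  define T where "T = e + a / e + D\<^sup>2 / (2 * (k * B) * e\<^sup>2)"
  have "0 < D" "0 < k * B" using assms by (simp_all add: D_def)
  then have "0 < T" using \<open>0 < a\<close> \<open>0 < e\<close> by (simp add: T_def add_pos_nonneg)
  define \<delta> where "\<delta> = D / (2 * T)"
  have "0 < \<delta>" using \<open>0 < D\<close> \<open>0 < T\<close> by (simp add: \<delta>_def)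
  moreover have "\<delta> * T \<le> D / 2" using \<open>0 < T\<close> by (simp add: \<delta>_def)
  ultimately show ?thesis
    using lyap_derivative_definite[OF assms(2-4), where a = a and \<sigma> = "-1" and \<delta> = \<delta>] \<open>0 < D\<close>
    by (auto simp: D_def T_def power2_commute)
qed

section \<open>The governor system\<close>

lemma sqrt_powr_quarter_square: "0 \<le> x \<Longrightarrow> (x powr (1/4))\<^sup>2 = sqrt x"
  for x :: real
  by (simp add: power2_eq_square powr_add[symmetric] powr_half_sqrt)

lemma powr_three_halves: "0 \<le> x \<Longrightarrow> x powr (3/2) = x * sqrt x"
  for x :: real
  using powr_add[of x 1 "1/2"] by (cases "x = 0") (simp_all add: powr_half_sqrt)

lemma powr_three_quarters: "0 \<le> x \<Longrightarrow> x powr (3/4) = sqrt x * x powr (1/4)"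
  for x :: real
  using powr_add[of x "1/2" "1/4"] by (simp add: powr_half_sqrt)

locale governor =
  fixes \<alpha> \<beta> \<epsilon> \<rho> \<kappa> :: real
  assumes \<beta>_pos: "0 < \<beta>" and \<beta>_less_1: "\<beta> < 1" and \<alpha>_pos: "0 < \<alpha>" and \<epsilon>_pos: "0 < \<epsilon>"
    and \<rho>_nonneg: "0 \<le> \<rho>" and \<kappa>_less_1: "\<kappa> < 1"
begin

abbreviation "F \<equiv> governor_field \<alpha> \<beta> \<epsilon> \<rho> \<kappa>"
abbreviation "P0 \<equiv> governor_P0 \<beta> \<rho> \<kappa>"

definition "s0 = sqrt (1 - \<beta>\<^sup>2)"
definition "z0 = snd (snd P0)"

definition "a_lin = \<rho> * z0\<^sup>2 * s0 - (z0\<^sup>2 + \<kappa>) * (\<beta>\<^sup>2 - s0\<^sup>2) + \<beta>"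
definition "B_lin = 2 * z0 * \<beta> * (\<rho> + s0)"
definition "k_lin = \<alpha> * s0"

lemma s0_pos: "0 < s0" and s0_square: "s0\<^sup>2 = 1 - \<beta>\<^sup>2"
proof -
  have "\<beta>\<^sup>2 < 1" using \<beta>_pos \<beta>_less_1 by (simp add: power_less_one_iff)
  then show "0 < s0" "s0\<^sup>2 = 1 - \<beta>\<^sup>2" by (simp_all add: s0_def)
qed

lemma P0_eq: "P0 = (arccos \<beta>, 0, z0)"
  by (simp add: governor_P0_def z0_def)

lemma cos_arccos_\<beta>: "cos (arccos \<beta>) = \<beta>" and sin_arccos_\<beta>: "sin (arccos \<beta>) = s0"
  using \<beta>_pos \<beta>_less_1 by (simp_all add: sin_arccos s0_def)

lemma z0_pos: "0 < z0" and z0_square: "z0\<^sup>2 * \<beta> * (\<rho> + s0) = s0 * (1 - \<kappa> * \<beta>)"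
proof -
  have "\<kappa> * \<beta> < 1" using mult_strict_right_mono[OF \<kappa>_less_1 \<beta>_pos] \<beta>_less_1 by simp
  have "0 < \<rho> + s0" using \<rho>_nonneg s0_pos by simp
  have "0 < 1 - \<beta>\<^sup>2" using s0_square s0_pos by (metis zero_less_power2 less_irrefl)
  have z0: "z0 = sqrt (1 - \<kappa> * \<beta>) * (1 - \<beta>\<^sup>2) powr (1/4) / (sqrt \<beta> * sqrt (\<rho> + s0))"
    by (simp add: z0_def governor_P0_def s0_def)
  show "0 < z0"
    unfolding z0 using \<open>\<kappa> * \<beta> < 1\<close> \<open>0 < \<rho> + s0\<close> \<open>0 < 1 - \<beta>\<^sup>2\<close> \<beta>_pos
    by (intro divide_pos_pos mult_pos_pos) auto
  have "z0\<^sup>2 = (1 - \<kappa> * \<beta>) * s0 / (\<beta> * (\<rho> + s0))"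
    unfolding z0 using \<open>\<kappa> * \<beta> < 1\<close> \<open>0 < \<rho> + s0\<close> \<open>0 < 1 - \<beta>\<^sup>2\<close> \<beta>_pos
    by (simp add: power_divide power_mult_distrib sqrt_powr_quarter_square s0_def)
  then show "z0\<^sup>2 * \<beta> * (\<rho> + s0) = s0 * (1 - \<kappa> * \<beta>)"
    using \<open>0 < \<rho> + s0\<close> \<beta>_pos by (simp add: eq_divide_eq mult.commute mult.left_commute)
qed

lemma B_lin_pos: "0 < B_lin"
  using z0_pos \<beta>_pos \<rho>_nonneg s0_pos by (simp add: B_lin_def)

lemma k_lin_pos: "0 < k_lin"
  using \<alpha>_pos s0_pos by (simp add: k_lin_def)

lemma a_lin_eq: "a_lin * s0 * \<beta> = \<rho> * z0\<^sup>2 * \<beta> ^ 3 + s0 ^ 3"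
proof -
  have "(z0\<^sup>2 + \<kappa>) * s0 * \<beta> = s0 - \<rho> * z0\<^sup>2 * \<beta>" using z0_square by (simp add: algebra_simps)
  moreover have "a_lin * s0 * \<beta> = \<rho> * z0\<^sup>2 * s0\<^sup>2 * \<beta> - (z0\<^sup>2 + \<kappa>) * s0 * \<beta> * (\<beta>\<^sup>2 - s0\<^sup>2) + s0 * \<beta>\<^sup>2"
    unfolding a_lin_def by algebra
  ultimately show ?thesis by algebra
qed

lemma a_lin_pos: "0 < a_lin"
proof -
  have "0 < \<rho> * z0\<^sup>2 * \<beta> ^ 3 + s0 ^ 3" using \<rho>_nonneg \<beta>_pos s0_pos by (intro add_nonneg_pos) auto
  then have "0 < a_lin * (s0 * \<beta>)" using a_lin_eq by (simp add: mult.assoc)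
  then show ?thesis using s0_pos \<beta>_pos by (metis mult_pos_pos zero_less_mult_pos2)
qed

lemma field_P0: "F P0 = 0"
proof -
  have "\<rho> * z0\<^sup>2 * \<beta> + (z0\<^sup>2 + \<kappa>) * s0 * \<beta> - s0 = 0"
    using z0_square by (simp add: algebra_simps)
  then show ?thesis
    by (simp add: governor_field_def P0_eq cos_arccos_\<beta> sin_arccos_\<beta> zero_prod_def algebra_simps)
qed

lemma field_has_derivative_P0: "(F has_derivative linearized_field a_lin \<epsilon> B_lin k_lin) (at P0)"
proof -
  have F_eq: "F = (\<lambda>u. (fst (snd u),
      \<rho> * (snd (snd u))\<^sup>2 * cos (fst u) + ((snd (snd u))\<^sup>2 + \<kappa>) * sin (fst u) * cos (fst u)
        - sin (fst u) - \<epsilon> * fst (snd u),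
      \<alpha> * (cos (fst u) - \<beta>)))"
    by (auto simp: governor_field_def fun_eq_iff)
  show ?thesis
    unfolding F_eq P0_eq
    by (rule has_derivative_eq_rhs, (rule derivative_eq_intros | simp)+)
       (simp add: fun_eq_iff linearized_field_def case_prod_unfold a_lin_def B_lin_def k_lin_def
          cos_arccos_\<beta> sin_arccos_\<beta>, simp add: algebra_simps power2_eq_square)
qed

lemma eps_c_eq: "governor_eps_c \<alpha> \<beta> \<rho> \<kappa> = k_lin * B_lin / a_lin"
proof -
  define q where "q = sqrt (1 - \<kappa> * \<beta>)"
  define r4 where "r4 = (1 - \<beta>\<^sup>2) powr (1/4)"
  define sb where "sb = sqrt \<beta>"
  define sr where "sr = sqrt (\<rho> + s0)"
  define N where "N = \<rho> * (1 - \<kappa> * \<beta> ^ 3) + s0 ^ 3"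
  have "0 < \<rho> + s0" using \<rho>_nonneg s0_pos by simp
  have "0 \<le> 1 - \<beta>\<^sup>2" using s0_square by (metis zero_le_power2)
  have "sb * sb = \<beta>" "0 < sb" using \<beta>_pos by (simp_all add: sb_def)
  have "sr * sr = \<rho> + s0" "0 < sr" using \<open>0 < \<rho> + s0\<close> by (simp_all add: sr_def)
  have s0_cube: "s0 ^ 3 = s0 * (1 - \<beta>\<^sup>2)" using s0_square by (simp add: power3_eq_cube power2_eq_square)
  have qr4: "q * r4 = z0 * sb * sr"
    using \<open>0 < sb\<close> \<open>0 < sr\<close> by (simp add: z0_def governor_P0_def q_def r4_def sb_def sr_def s0_def)
  have "governor_eps_c \<alpha> \<beta> \<rho> \<kappa> = 2 * \<alpha> * (\<beta> * sb) * (s0 * r4) * q * ((\<rho> + s0) * sr) / N"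
    using powr_three_halves[of \<beta>] powr_three_quarters[OF \<open>0 \<le> 1 - \<beta>\<^sup>2\<close>]
      powr_three_halves[of "\<rho> + s0"] powr_three_halves[OF \<open>0 \<le> 1 - \<beta>\<^sup>2\<close>] s0_cube \<beta>_pos \<open>0 < \<rho> + s0\<close>
    by (simp add: governor_eps_c_def sb_def sr_def q_def r4_def N_def s0_def[symmetric] mult.commute)
  also have "2 * \<alpha> * (\<beta> * sb) * (s0 * r4) * q * ((\<rho> + s0) * sr)
      = 2 * \<alpha> * \<beta> * s0 * (\<rho> + s0) * z0 * (sb * sb) * (sr * sr)"
    using qr4 by algebra
  also have "\<dots> = k_lin * B_lin * ((\<rho> + s0) * \<beta>)"
    unfolding \<open>sb * sb = \<beta>\<close> \<open>sr * sr = \<rho> + s0\<close> k_lin_def B_lin_def by algebra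
  also have "N = a_lin * ((\<rho> + s0) * \<beta>)"
  proof -
    have "s0 * (a_lin * ((\<rho> + s0) * \<beta>)) = \<rho> * \<beta>\<^sup>2 * (z0\<^sup>2 * \<beta> * (\<rho> + s0)) + s0 ^ 3 * (\<rho> + s0)"
      using a_lin_eq by algebra
    also have "\<dots> = s0 * N"
      unfolding z0_square s0_cube N_def by algebra
    finally show ?thesis using s0_pos by simp
  qed
  finally show ?thesis using \<open>0 < \<rho> + s0\<close> \<beta>_pos by simp
qed

lemma asymptotically_stable_if_friction_large:
  assumes "k_lin * B_lin < \<epsilon> * a_lin"
  shows "asymptotically_stable F P0"
proof -
  obtain m l \<mu> where "0 < l" and l: "\<And>v. l * (norm v)\<^sup>2 \<le> lyap_form a_lin \<epsilon> B_lin k_lin m v"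
    and "0 < \<mu>"
    and \<mu>: "\<And>v. \<mu> * (norm v)\<^sup>2 \<le> - inner (lyap_grad a_lin \<epsilon> B_lin k_lin m v) (linearized_field a_lin \<epsilon> B_lin k_lin v)"
    using linearized_stable_lyapunov[OF a_lin_pos \<epsilon>_pos B_lin_pos k_lin_pos assms] by blast
  define Q where "Q = lyap_form a_lin \<epsilon> B_lin k_lin m"
  define G where "G = lyap_grad a_lin \<epsilon> B_lin k_lin m"
  obtain L where "0 < L" and L: "\<And>v. Q v \<le> L * (norm v)\<^sup>2"
    using homogeneous2_upper_bound[OF continuous_on_lyap_form lyap_form_scaleR] unfolding Q_def by blast
  have "bounded_linear (\<lambda>v. - G v)"
    unfolding G_def by (intro bounded_linear_minus bounded_linear_lyap_grad)
  from inner_field_lower_bound_near_equilibrium[OF field_has_derivative_P0 field_P0 this _ \<open>0 < \<mu>\<close>]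
  obtain r where "0 < r"
    and r: "\<And>u. norm (u - P0) < r \<Longrightarrow> \<mu> / 2 * (norm (u - P0))\<^sup>2 \<le> - inner (G (u - P0)) (F u)"
    using \<mu> by (auto simp: G_def)
  show ?thesis
  proof (rule asymptotically_stable_by_lyapunov[where V = "\<lambda>u. Q (u - P0)"
        and DV = "\<lambda>u h. inner (G (u - P0)) h" and lam = l and Lam = L and R = r and \<gamma> = "\<mu> / (2 * L)"])
    show "((\<lambda>u. Q (u - P0)) has_derivative (\<lambda>h. inner (G (u - P0)) h)) (at u)" for u
      unfolding Q_def G_def by (rule lyap_form_diff_has_derivative)
    show "l * (norm (u - P0))\<^sup>2 \<le> Q (u - P0)" for u unfolding Q_def by (rule l)
    show "Q (u - P0) \<le> L * (norm (u - P0))\<^sup>2" for u by (rule L)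
    show "\<exists>L. L-lipschitz_on (cball P0 r) F" for r
      by (rule governor_field_lipschitz_on_bounded[OF bounded_cball])
    show "inner (G (u - P0)) (F u) \<le> - (\<mu> / (2 * L)) * Q (u - P0)" if "norm (u - P0) < r" for u
    proof -
      have "\<mu> / (2 * L) * Q (u - P0) \<le> \<mu> / (2 * L) * (L * (norm (u - P0))\<^sup>2)"
        using L \<open>0 < \<mu>\<close> \<open>0 < L\<close> by (intro mult_left_mono) auto
      then show ?thesis using r[OF that] \<open>0 < L\<close> by simp
    qed
  qed (use \<open>0 < l\<close> \<open>0 < L\<close> \<open>0 < r\<close> \<open>0 < \<mu>\<close> in simp_all)
qed

lemma not_lyapunov_stable_if_friction_small:
  assumes "\<epsilon> * a_lin < k_lin * B_lin"
  shows "\<not> lyapunov_stable F P0"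
proof -
  obtain m \<mu> where "0 < \<mu>"
    and \<mu>: "\<And>v. \<mu> * (norm v)\<^sup>2 \<le> inner (lyap_grad a_lin \<epsilon> B_lin k_lin m v) (linearized_field a_lin \<epsilon> B_lin k_lin v)"
    using linearized_unstable_chetaev[OF a_lin_pos \<epsilon>_pos B_lin_pos k_lin_pos assms] by blast
  define Q where "Q = lyap_form a_lin \<epsilon> B_lin k_lin m"
  define G where "G = lyap_grad a_lin \<epsilon> B_lin k_lin m"
  obtain L where "0 < L" and L: "\<And>v. Q v \<le> L * (norm v)\<^sup>2"
    using homogeneous2_upper_bound[OF continuous_on_lyap_form lyap_form_scaleR] unfolding Q_def by blast
  from inner_field_lower_bound_near_equilibrium[OF field_has_derivative_P0 field_P0
      bounded_linear_lyap_grad[of a_lin \<epsilon> B_lin k_lin m] \<mu> \<open>0 < \<mu>\<close>]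
  obtain r where "0 < r"
    and r: "\<And>u. norm (u - P0) < r \<Longrightarrow> \<mu> / 2 * (norm (u - P0))\<^sup>2 \<le> inner (G (u - P0)) (F u)"
    by (auto simp: G_def)
  show ?thesis
  proof (rule not_lyapunov_stable_by_chetaev[where W = "\<lambda>u. Q (u - P0)"
        and DW = "\<lambda>u h. inner (G (u - P0)) h" and Lam = L and R = r and \<gamma> = "\<mu> / (2 * L)"])
    show "((\<lambda>u. Q (u - P0)) has_derivative (\<lambda>h. inner (G (u - P0)) h)) (at u)" for u
      unfolding Q_def G_def by (rule lyap_form_diff_has_derivative)
    show "Q (u - P0) \<le> L * (norm (u - P0))\<^sup>2" for u by (rule L)
    show "\<mu> / (2 * L) * Q (u - P0) \<le> inner (G (u - P0)) (F u)" if "norm (u - P0) < r" for u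
    proof -
      have "\<mu> / (2 * L) * Q (u - P0) \<le> \<mu> / (2 * L) * (L * (norm (u - P0))\<^sup>2)"
        using L \<open>0 < \<mu>\<close> \<open>0 < L\<close> by (intro mult_left_mono) auto
      then show ?thesis using r[OF that] \<open>0 < L\<close> by simp
    qed
    show "\<exists>x0. dist x0 P0 < d \<and> 0 < Q (x0 - P0)" if "0 < d" for d
    proof (intro exI conjI)
      show "dist (P0 + (0, 0, d / 2)) P0 < d" using that by (simp add: dist_norm norm_Pair)
      show "0 < Q (P0 + (0, 0, d / 2) - P0)" using B_lin_pos that by (simp add: Q_def lyap_form_def)
    qed
  qed (use \<open>0 < r\<close> \<open>0 < \<mu>\<close> \<open>0 < L\<close> in simp_all)
qed

end

theorem theorem2p2:
  fixes \<alpha> \<beta> \<epsilon> \<rho> \<kappa> :: real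
  assumes "0 < \<beta>" "\<beta> < 1" "\<alpha> > 0" "\<epsilon> > 0" "\<rho> \<ge> 0" "0 \<le> \<kappa>" "\<kappa> < 1"
  shows "(\<epsilon> > governor_eps_c \<alpha> \<beta> \<rho> \<kappa> \<longrightarrow>
            asymptotically_stable (governor_field \<alpha> \<beta> \<epsilon> \<rho> \<kappa>) (governor_P0 \<beta> \<rho> \<kappa>))
       \<and> (\<epsilon> < governor_eps_c \<alpha> \<beta> \<rho> \<kappa> \<longrightarrow>
            \<not> lyapunov_stable (governor_field \<alpha> \<beta> \<epsilon> \<rho> \<kappa>) (governor_P0 \<beta> \<rho> \<kappa>))"
proof -
  interpret governor \<alpha> \<beta> \<epsilon> \<rho> \<kappa> using assms by unfold_locales auto
  have "governor_eps_c \<alpha> \<beta> \<rho> \<kappa> < \<epsilon> \<longleftrightarrow> k_lin * B_lin < \<epsilon> * a_lin"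
    and "\<epsilon> < governor_eps_c \<alpha> \<beta> \<rho> \<kappa> \<longleftrightarrow> \<epsilon> * a_lin < k_lin * B_lin"
    using a_lin_pos by (simp_all add: eps_c_eq pos_divide_less_eq pos_less_divide_eq)
  then show ?thesis
    using asymptotically_stable_if_friction_large not_lyapunov_stable_if_friction_small by blast
qed

end
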